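(* Let $K$ be an algebraically closed field of characteristic zero, $\mathcal{K} = K(t)$, $d \ge 2$, $f_d(z) = z^d+t$, and $\alpha \in \mathcal{K}$. Then $\widehat{h}_{f_d}(\alpha) = h(\alpha)$ if $v_\infty(\alpha) < 0$, and $\widehat{h}_{f_d}(\alpha) = h(\alpha) + 1/d$ if $v_\infty(\alpha) \ge 0$. Thus, for all $n \ge 1$, $h(f_d^n(\alpha)) = d^n \widehat{h}_{f_d}(\alpha)$.
   Context: Valuations: $v_\infty(g) = \deg(\text{denominator}) - \deg(\text{numerator})$ for $g \in K(t)$. The height $h(\alpha)$ of $\alpha \in \mathcal{K}$ is its degree as a rational function in $t$, i.e. $-\sum_\mathfrak{p}\min\{v_\mathfrak{p}(\alpha),0\}$ over places of $\mathcal{K}$ trivial on $K$. The canonical height is $\widehat{h}_{f_d}(\alpha) := \lim_{n\to\infty} d^{-n} h(f_d^n(\alpha))$. *)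

theory Defs
  imports Complex_Main "HOL-Computational_Algebra.Computational_Algebra"
    "HOL-Computational_Algebra.Normalized_Fraction"
begin

text \<open>The rational function field K(t) is modelled as the fraction field of K[t],
  i.e. the type 'a poly fract. A rational function is written in lowest terms via
  quot_of_fract (normalized numerator, denominator).\<close>

definition t_var :: "'a::field poly fract" where
  "t_var = to_fract [:0, 1:]"

definition ht :: "'a::{field,field_gcd} poly fract \<Rightarrow> nat" where
  "ht \<alpha> = max (degree (fst (quot_of_fract \<alpha>))) (degree (snd (quot_of_fract \<alpha>)))"

text \<open>Valuation at infinity: deg(denominator) - deg(numerator).  For \<alpha> = 0 (true
  valuation +\<infinity>) this gives 0, which only matters through the sign test v \<ge> 0.\<close>
definition v_inf :: "'a::{field,field_gcd} poly fract \<Rightarrow> int" where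
  "v_inf \<alpha> = int (degree (snd (quot_of_fract \<alpha>))) - int (degree (fst (quot_of_fract \<alpha>)))"

definition fd :: "nat \<Rightarrow> 'a::field poly fract \<Rightarrow> 'a poly fract" where
  "fd d z = z ^ d + t_var"

definition canonical_height :: "nat \<Rightarrow> 'a::{field,field_gcd} poly fract \<Rightarrow> real" where
  "canonical_height d \<alpha> = lim (\<lambda>n. real (ht ((fd d ^^ n) \<alpha>)) / real d ^ n)"

end

theory Submission
  imports Defs
begin

text \<open>Write \<alpha> = p/q in lowest terms. Then f_d(\<alpha>) = (p^d + t q^d)/q^d is again in lowest terms,
  and its numerator has degree d deg p if deg p > deg q and d deg q + 1 otherwise; either way
  it exceeds the denominator degree d deg q. So h(f_d(\<alpha>)) = d h(\<alpha>) or d h(\<alpha>) + 1 according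
  to the sign of v_\<infinity>(\<alpha>), and every iterate from f_d(\<alpha>) on has v_\<infinity> < 0. Hence
  h(f_d^n(\<alpha>)) = d^(n-1) h(f_d(\<alpha>)) for n \<ge> 1: the sequence d^-n h(f_d^n(\<alpha>)) is constant
  from n = 1 on, with value h(f_d(\<alpha>))/d.\<close>

lemma Fract_power: "Fract (a::'a::idom) b ^ n = Fract (a ^ n) (b ^ n)"
  by (induction n) (simp_all add: One_fract_def)

lemma degree_quot_of_fract_Fract:
  fixes a b :: "'a::{field,field_gcd} poly"
  assumes "coprime a b" and "b \<noteq> 0"
  shows "degree (fst (quot_of_fract (Fract a b))) = degree a"
    and "degree (snd (quot_of_fract (Fract a b))) = degree b"
proof -
  have quot: "quot_of_fract (Fract a b) = normalize_quot (a, b)"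
    using quot_of_fract_quot_to_fract[of "(a, b)"] by (simp add: quot_to_fract_def)
  obtain e where e: "a = fst (normalize_quot (a, b)) * e" "b = snd (normalize_quot (a, b)) * e"
      "e dvd a" "e dvd b" "e \<noteq> 0"
    using normalize_quotE[OF \<open>b \<noteq> 0\<close>, of a] by blast
  have "is_unit e"
    using \<open>coprime a b\<close> e(3,4) by (meson coprime_common_divisor)
  then have "degree e = 0"
    by (simp add: is_unit_iff_degree e(5))
  then show "degree (fst (quot_of_fract (Fract a b))) = degree a"
        and "degree (snd (quot_of_fract (Fract a b))) = degree b"
    using e(1,2,5) unfolding quot
    by (metis add_0_right degree_mult_eq mult_zero_left)+
qed

lemma coprime_power_add_mult_power:
  fixes p q r :: "'a::semiring_gcd"
  assumes "coprime p q"
  shows "coprime (p ^ d + r * q ^ d) (q ^ d)"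
proof (rule coprimeI)
  fix c assume "c dvd p ^ d + r * q ^ d" and c_q: "c dvd q ^ d"
  then have "c dvd p ^ d"
    by (simp add: dvd_add_left_iff)
  moreover have "coprime (p ^ d) (q ^ d)"
    using assms by simp
  ultimately show "is_unit c"
    using c_q by (meson coprime_common_divisor)
qed

lemma fd_Fract:
  fixes p q :: "'a::field poly"
  assumes "q \<noteq> 0"
  shows "fd d (Fract p q) = Fract (p ^ d + [:0, 1:] * q ^ d) (q ^ d)"
  using assms by (simp add: fd_def t_var_def Fract_power to_fract_def)

lemma degree_power_add_monom_power:
  fixes p q :: "'a::field poly"
  assumes "d \<ge> 2" and "q \<noteq> 0"
  shows "degree (p ^ d + [:0, 1:] * q ^ d) =
           (if degree q < degree p then d * degree p else d * degree q + 1)"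
proof -
  have deg_tq: "degree ([:0, 1:] * q ^ d) = d * degree q + 1"
    using \<open>q \<noteq> 0\<close> by (simp add: degree_mult_eq degree_power_eq)
  show ?thesis
  proof (cases "degree q < degree p")
    case True
    then have "p \<noteq> 0" by auto
    then have "degree (p ^ d) = d * degree p"
      by (simp add: degree_power_eq)
    moreover have "d * degree q + d \<le> d * degree p"
      using True mult_le_mono2[of "degree q + 1" "degree p" d] by simp
    ultimately show ?thesis
      using True deg_tq \<open>d \<ge> 2\<close> by (simp add: degree_add_eq_left)
  next
    case False
    have "degree (p ^ d) \<le> d * degree q"
      using False degree_power_le[of p d] mult_le_mono2[of "degree p" "degree q" d]
      by (simp add: mult.commute le_trans)
    then have "degree (p ^ d) < degree ([:0, 1:] * q ^ d)"
      using deg_tq by simp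
    then show ?thesis
      using False deg_tq by (simp add: degree_add_eq_right)
  qed
qed

lemma degree_quot_of_fract_fd:
  fixes \<alpha> :: "'a::{field,field_gcd} poly fract"
  assumes "d \<ge> 2"
  defines "a \<equiv> degree (fst (quot_of_fract \<alpha>))" and "b \<equiv> degree (snd (quot_of_fract \<alpha>))"
  shows "degree (fst (quot_of_fract (fd d \<alpha>))) = (if b < a then d * a else d * b + 1)"
    and "degree (snd (quot_of_fract (fd d \<alpha>))) = d * b"
proof -
  define p where "p = fst (quot_of_fract \<alpha>)"
  define q where "q = snd (quot_of_fract \<alpha>)"
  have "q \<noteq> 0" "coprime p q" "\<alpha> = Fract p q"
    by (simp_all add: p_def q_def coprime_quot_of_fract)
  then have fd_\<alpha>: "fd d \<alpha> = Fract (p ^ d + [:0, 1:] * q ^ d) (q ^ d)"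
    by (simp add: fd_Fract)
  have lowest_terms: "coprime (p ^ d + [:0, 1:] * q ^ d) (q ^ d)" "q ^ d \<noteq> 0"
    using coprime_power_add_mult_power[OF \<open>coprime p q\<close>] \<open>q \<noteq> 0\<close> by (blast, simp)
  show "degree (fst (quot_of_fract (fd d \<alpha>))) = (if b < a then d * a else d * b + 1)"
    using degree_power_add_monom_power[OF \<open>d \<ge> 2\<close> \<open>q \<noteq> 0\<close>, of p]
      degree_quot_of_fract_Fract(1)[OF lowest_terms]
    by (simp add: fd_\<alpha> a_def b_def p_def q_def)
  show "degree (snd (quot_of_fract (fd d \<alpha>))) = d * b"
    using degree_quot_of_fract_Fract(2)[OF lowest_terms] \<open>q \<noteq> 0\<close>
    by (simp add: fd_\<alpha> degree_power_eq b_def q_def)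
qed

lemma ht_fd:
  fixes \<alpha> :: "'a::{field,field_gcd} poly fract"
  assumes "d \<ge> 2"
  shows "ht (fd d \<alpha>) = (if v_inf \<alpha> < 0 then d * ht \<alpha> else d * ht \<alpha> + 1)"
  using degree_quot_of_fract_fd[OF assms, of \<alpha>] assms
  by (auto simp: ht_def v_inf_def max_def)

lemma v_inf_fd_neg:
  fixes \<alpha> :: "'a::{field,field_gcd} poly fract"
  assumes "d \<ge> 2"
  shows "v_inf (fd d \<alpha>) < 0"
  using degree_quot_of_fract_fd[OF assms, of \<alpha>] assms
  by (auto simp: v_inf_def)

lemma ht_funpow_fd:
  fixes \<alpha> :: "'a::{field,field_gcd} poly fract"
  assumes "d \<ge> 2" and "n \<ge> 1"
  shows "ht ((fd d ^^ n) \<alpha>) = d ^ (n - 1) * ht (fd d \<alpha>)"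
  using \<open>n \<ge> 1\<close>
proof (induction n rule: dec_induct)
  case base
  then show ?case by simp
next
  case (step m)
  then obtain k where "m = Suc k" by (cases m) auto
  then have "v_inf ((fd d ^^ m) \<alpha>) < 0"
    using v_inf_fd_neg[OF \<open>d \<ge> 2\<close>] by simp
  then show ?case
    using ht_fd[OF \<open>d \<ge> 2\<close>, of "(fd d ^^ m) \<alpha>"] step.IH \<open>m = Suc k\<close> by simp
qed

theorem corollary2p2:
  fixes d :: nat and \<alpha> :: "'a::{alg_closed_field, field_char_0, field_gcd} poly fract"
  assumes "d \<ge> 2"
  shows "convergent (\<lambda>n. real (ht ((fd d ^^ n) \<alpha>)) / real d ^ n)
       \<and> canonical_height d \<alpha> =
           (if v_inf \<alpha> < 0 then real (ht \<alpha>) else real (ht \<alpha>) + 1 / real d)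
       \<and> (\<forall>n\<ge>1. real (ht ((fd d ^^ n) \<alpha>)) = real d ^ n * canonical_height d \<alpha>)"
proof -
  define c where "c = real (ht (fd d \<alpha>)) / real d"
  have "real d > 0" using assms by simp
  have scaled_const: "real (ht ((fd d ^^ n) \<alpha>)) / real d ^ n = c" if "n \<ge> 1" for n
  proof -
    have "real d ^ n = real d ^ (n - 1) * real d"
      using that by (metis Suc_diff_le diff_Suc_1 power_Suc2)
    then show ?thesis
      using ht_funpow_fd[OF assms that, of \<alpha>] \<open>real d > 0\<close> by (simp add: c_def)
  qed
  then have lim: "(\<lambda>n. real (ht ((fd d ^^ n) \<alpha>)) / real d ^ n) \<longlonglongrightarrow> c"
    by (intro tendsto_eventually) (auto simp: eventually_sequentially)
  then have "canonical_height d \<alpha> = c"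
    unfolding canonical_height_def by (rule limI)
  moreover have "c = (if v_inf \<alpha> < 0 then real (ht \<alpha>) else real (ht \<alpha>) + 1 / real d)"
    using ht_fd[OF assms, of \<alpha>] \<open>real d > 0\<close> by (simp add: c_def field_simps)
  moreover have "\<forall>n\<ge>1. real (ht ((fd d ^^ n) \<alpha>)) = real d ^ n * c"
    using scaled_const \<open>real d > 0\<close> by (simp add: field_simps)
  ultimately show ?thesis
    using lim convergent_def by auto
qed

end
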